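(* Let $f,g\in C_c^\infty(\mathbb{R}^n)$ be nonnegative and let $\mathcal{M}$ be the bilinear maximal operator with $\alpha=-1$, i.e. $\mathcal{M}(f,g)(x)=\sup_{R>0}\frac{1}{m(B_R)}\int_{B_R}f(x+z)g(x-z)\,dz$. Then for all $x,y\in\mathbb{R}^n$, $$|\mathcal{M}(f,g)(x)-\mathcal{M}(f,g)(y)|\le \int_{\overline{xy}}\Big\{\mathcal{M}(f,|\nabla g|)+\mathcal{M}(|\nabla f|,g)\Big\}\,d\mathcal{H}^1,$$ where $\overline{xy}$ is the line segment from $x$ to $y$ and $\mathcal{H}^1$ is one-dimensional Hausdorff measure.
   Context: $B_R$ is the ball of radius $R$ centered at the origin, $m$ is Lebesgue measure on $\mathbb{R}^n$; for general (possibly sign-changing) arguments $\mathcal{M}(f,g)(x)=\sup_{R>0}\frac{1}{m(B_R)}\int_{B_R}|f(x+z)g(x-z)|\,dz$. *)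

theory Defs
  imports "HOL-Analysis.Analysis"
begin

fun iter_dderiv :: "'a::euclidean_space list \<Rightarrow> ('a \<Rightarrow> real) \<Rightarrow> 'a \<Rightarrow> real" where
  "iter_dderiv [] f = f"
| "iter_dderiv (v # vs) f = (\<lambda>x. frechet_derivative (iter_dderiv vs f) (at x) v)"

definition smooth :: "('a::euclidean_space \<Rightarrow> real) \<Rightarrow> bool" where
  "smooth f \<longleftrightarrow> (\<forall>vs x. iter_dderiv vs f differentiable (at x))"

definition compact_support :: "('a::euclidean_space \<Rightarrow> real) \<Rightarrow> bool" where
  "compact_support f \<longleftrightarrow> compact (closure {x. f x \<noteq> 0})"

definition grad_norm :: "('a::euclidean_space \<Rightarrow> real) \<Rightarrow> 'a \<Rightarrow> real" where
  "grad_norm f x = onorm (frechet_derivative f (at x))"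

definition bmax :: "('a::euclidean_space \<Rightarrow> real) \<Rightarrow> ('a \<Rightarrow> real) \<Rightarrow> 'a \<Rightarrow> real" where
  "bmax f g x = (SUP R\<in>{0<..}. (\<integral>z\<in>ball 0 R. \<bar>f (x + z) * g (x - z)\<bar> \<partial>lborel)
                               / measure lborel (ball (0::'a) R))"

(* integral over the segment from x to y w.r.t. 1-dim. Hausdorff measure,
   via arc-length parametrisation t \<mapsto> x + t (y - x), t\<in>[0,1] *)
definition segment_integral :: "('a::euclidean_space \<Rightarrow> real) \<Rightarrow> 'a \<Rightarrow> 'a \<Rightarrow> ennreal" where
  "segment_integral h x y =
     ennreal (dist x y) * (\<integral>\<^sup>+ t\<in>{0..1}. ennreal (h (x + t *\<^sub>R (y - x))) \<partial>lborel)"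

end

theory Submission
  imports Defs
begin

text \<open>
  Fix a radius R and let A(w) be the average of |f(w + z) g(w - z)| over z in the ball B_R.
  Along the segment w_t = x + t (y - x), the fundamental theorem of calculus and the product rule
  bound |f(y + z) g(y - z) - f(x + z) g(x - z)| by |y - x| times the integral over t of
  |\<nabla>f|(w_t + z) g(w_t - z) + f(w_t + z) |\<nabla>g|(w_t - z). Averaging over z and exchanging the
  two integrals (Tonelli) bounds |A(x) - A(y)| by the segment integral of the corresponding ball
  averages, each of which is dominated by a maximal function. The estimate is uniform in R, and a
  supremum is 1-Lipschitz for the uniform distance, so the bound passes to the maximal operator.
\<close>

lemma smooth_iter_dderiv_differentiable: "smooth f \<Longrightarrow> iter_dderiv vs f differentiable (at x)"
  unfolding smooth_def by blast

lemma smooth_has_derivative: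
  assumes "smooth f"
  shows "(f has_derivative frechet_derivative f (at x)) (at x)"
  using smooth_iter_dderiv_differentiable[OF assms, of "[]" x]
  by (simp add: frechet_derivative_works[symmetric])

lemma smooth_continuous: "smooth f \<Longrightarrow> continuous_on UNIV f"
  by (meson continuous_at_imp_continuous_on has_derivative_continuous smooth_has_derivative)

lemma continuous_on_smooth_directional_derivative:
  assumes "smooth f"
  shows "continuous_on UNIV (\<lambda>x. frechet_derivative f (at x) v)"
  using smooth_iter_dderiv_differentiable[OF assms, of "[v]"]
  by (simp add: continuous_at_imp_continuous_on differentiable_imp_continuous_within)

lemma grad_norm_eq_norm_Blinfun:
  assumes "smooth f"
  shows "grad_norm f x = norm (Blinfun (frechet_derivative f (at x)))"
  using has_derivative_bounded_linear[OF smooth_has_derivative[OF assms, of x]]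
  by (simp add: grad_norm_def norm_blinfun.rep_eq bounded_linear_Blinfun_apply)

lemma grad_norm_nonneg: "smooth f \<Longrightarrow> grad_norm f x \<ge> 0"
  by (simp add: grad_norm_eq_norm_Blinfun)

lemma continuous_on_grad_norm:
  assumes "smooth f"
  shows "continuous_on UNIV (grad_norm f)"
proof -
  have "continuous_on UNIV (\<lambda>x. Blinfun (frechet_derivative f (at x)))"
  proof (rule continuous_on_blinfun_componentwise)
    fix v :: 'a
    have "Blinfun (frechet_derivative f (at x)) v = frechet_derivative f (at x) v" for x
      using has_derivative_bounded_linear[OF smooth_has_derivative[OF assms, of x]]
      by (simp add: bounded_linear_Blinfun_apply)
    then show "continuous_on UNIV (\<lambda>x. Blinfun (frechet_derivative f (at x)) v)"
      using continuous_on_smooth_directional_derivative[OF assms] by simp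
  qed
  then show ?thesis
    unfolding grad_norm_eq_norm_Blinfun[OF assms] by (rule continuous_on_norm)
qed

lemma abs_directional_derivative_le_grad_norm:
  assumes "smooth f"
  shows "\<bar>frechet_derivative f (at p) v\<bar> \<le> grad_norm f p * norm v"
  using onorm[OF has_derivative_bounded_linear[OF smooth_has_derivative[OF assms]]]
  by (simp add: grad_norm_def)

lemma has_real_derivative_along_line:
  assumes "smooth f"
  shows "((\<lambda>t. f (a + t *\<^sub>R v)) has_real_derivative frechet_derivative f (at (a + t *\<^sub>R v)) v) (at t)"
proof -
  let ?Df = "frechet_derivative f (at (a + t *\<^sub>R v))"
  have Df: "(f has_derivative ?Df) (at (a + t *\<^sub>R v))"
    by (rule smooth_has_derivative[OF assms])
  have "((\<lambda>t. a + t *\<^sub>R v) has_derivative (\<lambda>s. s *\<^sub>R v)) (at t)"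
    by (auto intro!: derivative_eq_intros)
  from has_derivative_compose[OF this Df]
  have "((\<lambda>t. f (a + t *\<^sub>R v)) has_derivative (\<lambda>s. ?Df (s *\<^sub>R v))) (at t)" .
  moreover have "(\<lambda>s. ?Df (s *\<^sub>R v)) = (*) (?Df v)"
    using linear.scaleR[OF bounded_linear.linear[OF has_derivative_bounded_linear[OF Df]]]
    by (auto simp: mult.commute)
  ultimately show ?thesis
    by (simp add: has_field_derivative_def)
qed

lemma not_in_closure_support: "x \<notin> closure {x. f x \<noteq> 0} \<Longrightarrow> f x = 0"
proof (rule ccontr)
  assume "f x \<noteq> 0"
  then have "x \<in> closure {x. f x \<noteq> 0}"
    by (intro subsetD[OF closure_subset]) simp
  moreover assume "x \<notin> closure {x. f x \<noteq> 0}"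
  ultimately show False by contradiction
qed

lemma bounded_vanishing_outside_compact:
  fixes h :: "'a::topological_space \<Rightarrow> real"
  assumes "continuous_on UNIV h" "compact K" "\<And>x. x \<notin> K \<Longrightarrow> h x = 0"
  shows "\<exists>B. \<forall>x. \<bar>h x\<bar> \<le> B"
proof -
  have "bounded (h ` K)"
    by (rule compact_imp_bounded, rule compact_continuous_image[OF _ assms(2)])
       (rule continuous_on_subset[OF assms(1)], simp)
  then obtain B where B: "\<And>y. y \<in> h ` K \<Longrightarrow> norm y \<le> B"
    unfolding bounded_iff by blast
  have "\<bar>h x\<bar> \<le> max B 0" for x
  proof (cases "x \<in> K")
    case True then show ?thesis using B[of "h x"] by simp
  next
    case False then show ?thesis using assms(3) by simp
  qed
  then show ?thesis by blast
qed

lemma grad_norm_outside_support: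
  assumes "smooth f" "x \<notin> closure {x. f x \<noteq> 0}"
  shows "grad_norm f x = 0"
proof -
  have "((\<lambda>_. 0::real) has_derivative (\<lambda>_. 0)) (at x)" by simp
  then have "(f has_derivative (\<lambda>_. 0)) (at x)"
  proof (rule has_derivative_transform_within_open)
    show "open (- closure {x. f x \<noteq> 0})" by blast
    show "x \<in> - closure {x. f x \<noteq> 0}" using assms(2) by simp
  qed (metis ComplD not_in_closure_support)
  then show ?thesis
    by (simp add: grad_norm_def frechet_derivative_at[symmetric] onorm_zero)
qed

lemma bounded_smooth_compact_support:
  assumes "smooth f" "compact_support f"
  shows "\<exists>B. \<forall>x. \<bar>f x\<bar> \<le> B"
  using assms(2) unfolding compact_support_def
  by (rule bounded_vanishing_outside_compact[OF smooth_continuous[OF assms(1)]])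
     (rule not_in_closure_support)

lemma bounded_grad_norm_compact_support:
  assumes "smooth f" "compact_support f"
  shows "\<exists>B. \<forall>x. \<bar>grad_norm f x\<bar> \<le> B"
  using assms(2) unfolding compact_support_def
  by (rule bounded_vanishing_outside_compact[OF continuous_on_grad_norm[OF assms(1)]])
     (rule grad_norm_outside_support[OF assms(1)])

lemma abs_SUP_diff_le:
  fixes F G :: "'b \<Rightarrow> real"
  assumes "A \<noteq> {}" "bdd_above (F ` A)" "bdd_above (G ` A)"
    and "\<And>a. a \<in> A \<Longrightarrow> \<bar>F a - G a\<bar> \<le> r"
  shows "\<bar>(SUP a\<in>A. F a) - (SUP a\<in>A. G a)\<bar> \<le> r"
proof -
  have "(SUP a\<in>A. F' a) \<le> (SUP a\<in>A. G' a) + r"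
    if "bdd_above (G' ` A)" "\<And>a. a \<in> A \<Longrightarrow> F' a \<le> G' a + r" for F' G' :: "'b \<Rightarrow> real"
  proof (rule cSUP_least[OF assms(1)])
    fix a assume "a \<in> A"
    then show "F' a \<le> (SUP a\<in>A. G' a) + r"
      using that(2)[of a] cSUP_upper[OF _ that(1), of a] by linarith
  qed
  from this[of G F] this[of F G] show ?thesis
    using assms(2-4) by (force simp: abs_le_iff)
qed

lemma lborel_set_nn_integral_swap:
  fixes G :: "'a::euclidean_space \<Rightarrow> 'b::euclidean_space \<Rightarrow> ennreal"
  assumes G: "case_prod G \<in> borel_measurable borel" and A: "A \<in> sets borel" and B: "B \<in> sets borel"
  shows "(\<integral>\<^sup>+y\<in>B. (\<integral>\<^sup>+x\<in>A. G x y \<partial>lborel) \<partial>lborel)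
       = (\<integral>\<^sup>+x\<in>A. (\<integral>\<^sup>+y\<in>B. G x y \<partial>lborel) \<partial>lborel)"
proof -
  define H where "H x y = G x y * indicator A x * indicator B y" for x y
  have G'[measurable]: "case_prod G \<in> borel_measurable (lborel \<Otimes>\<^sub>M lborel)"
    using G by (simp add: lborel_prod)
  have [measurable]: "A \<in> sets lborel" "B \<in> sets lborel"
    using A B by simp_all
  have H: "case_prod H \<in> borel_measurable (lborel \<Otimes>\<^sub>M lborel)"
    unfolding H_def by measurable
  have Gx[measurable]: "G x \<in> borel_measurable lborel" for x
    using measurable_compose[OF measurable_Pair1' G'] by simp
  have Gy: "(\<lambda>x. G x y) \<in> borel_measurable lborel" for y
    using measurable_compose[OF measurable_Pair2' G'] by simp
  have "(\<integral>\<^sup>+y\<in>B. (\<integral>\<^sup>+x\<in>A. G x y \<partial>lborel) \<partial>lborel) = (\<integral>\<^sup>+y. (\<integral>\<^sup>+x. H x y \<partial>lborel) \<partial>lborel)"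
    unfolding H_def using A Gy by (intro nn_integral_cong nn_integral_multc[symmetric]) simp
  also have "\<dots> = (\<integral>\<^sup>+x. (\<integral>\<^sup>+y. H x y \<partial>lborel) \<partial>lborel)"
    using H by (rule lborel_pair.Fubini')
  also have "\<dots> = (\<integral>\<^sup>+x\<in>A. (\<integral>\<^sup>+y\<in>B. G x y \<partial>lborel) \<partial>lborel)"
  proof (intro nn_integral_cong)
    fix x
    have "H x y = indicator A x * (G x y * indicator B y)" for y
      by (simp add: H_def mult.commute mult.left_commute)
    then show "(\<integral>\<^sup>+y. H x y \<partial>lborel) = (\<integral>\<^sup>+y\<in>B. G x y \<partial>lborel) * indicator A x"
      by (simp add: nn_integral_cmult mult.commute)
  qed
  finally show ?thesis .
qed

lemma set_nn_integral_eq_set_integral: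
  fixes F :: "'a \<Rightarrow> real"
  assumes "set_integrable M A F" "\<And>x. x \<in> A \<Longrightarrow> F x \<ge> 0"
  shows "(\<integral>\<^sup>+x\<in>A. ennreal (F x) \<partial>M) = ennreal (\<integral>x\<in>A. F x \<partial>M)"
  using assms unfolding set_lebesgue_integral_def set_integrable_def
  by (subst nn_integral_eq_integral[symmetric])
     (auto intro!: nn_integral_cong split: split_indicator)

lemma ennreal_abs_set_integral_diff_le:
  fixes p q :: "'a \<Rightarrow> real"
  assumes "set_integrable M A p" "set_integrable M A q"
  shows "ennreal \<bar>(\<integral>x\<in>A. p x \<partial>M) - (\<integral>x\<in>A. q x \<partial>M)\<bar> \<le> (\<integral>\<^sup>+x\<in>A. ennreal \<bar>p x - q x\<bar> \<partial>M)"
proof -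
  have int: "set_integrable M A (\<lambda>x. p x - q x)"
    using assms by (rule set_integral_diff)
  have "\<bar>(\<integral>x\<in>A. p x \<partial>M) - (\<integral>x\<in>A. q x \<partial>M)\<bar> \<le> (\<integral>x\<in>A. \<bar>p x - q x\<bar> \<partial>M)"
    using set_integral_norm_bound[OF int] set_integral_diff(2)[OF assms] by simp
  then show ?thesis
    using set_nn_integral_eq_set_integral[OF set_integrable_abs[OF int]] by simp
qed

definition ball_avg :: "('a::euclidean_space \<Rightarrow> real) \<Rightarrow> ('a \<Rightarrow> real) \<Rightarrow> 'a \<Rightarrow> real \<Rightarrow> real" where
  "ball_avg u v w R =
     (\<integral>z\<in>ball 0 R. \<bar>u (w + z) * v (w - z)\<bar> \<partial>lborel) / measure lborel (ball (0::'a) R)"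

lemma bmax_eq_SUP_ball_avg: "bmax u v w = (SUP R\<in>{0<..}. ball_avg u v w R)"
  by (simp add: bmax_def ball_avg_def)

lemma ball_avg_nonneg: "ball_avg u v w R \<ge> 0"
  unfolding ball_avg_def set_lebesgue_integral_def by simp

lemma set_integrable_ball_continuous:
  fixes F :: "'a::euclidean_space \<Rightarrow> real"
  assumes "continuous_on UNIV F"
  shows "set_integrable lborel (ball c R) F"
proof -
  have "set_integrable lborel (cball c R) F"
    unfolding set_integrable_def
    by (rule borel_integrable_compact) (auto intro: continuous_on_subset[OF assms])
  then show ?thesis
    by (rule set_integrable_subset) auto
qed

lemma continuous_on_abs_reflected_product:
  fixes u v :: "'a::real_normed_vector \<Rightarrow> real"
  assumes "continuous_on UNIV u" "continuous_on UNIV v"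
  shows "continuous_on UNIV (\<lambda>z. \<bar>u (w + z) * v (w - z)\<bar>)"
  by (intro continuous_intros continuous_on_compose2[OF assms(1)] continuous_on_compose2[OF assms(2)]) auto

lemma ball_avg_le_bound:
  fixes u v :: "'a::euclidean_space \<Rightarrow> real"
  assumes "continuous_on UNIV u" "continuous_on UNIV v"
    and bu: "\<And>x. \<bar>u x\<bar> \<le> Bu" and bv: "\<And>x. \<bar>v x\<bar> \<le> Bv" and "R > 0"
  shows "ball_avg u v w R \<le> Bu * Bv"
proof -
  let ?B = "ball (0::'a) R"
  have "(\<integral>z\<in>?B. \<bar>u (w + z) * v (w - z)\<bar> \<partial>lborel) \<le> (\<integral>z\<in>?B. Bu * Bv \<partial>lborel)"
  proof (rule set_integral_mono)
    show "set_integrable lborel ?B (\<lambda>z. \<bar>u (w + z) * v (w - z)\<bar>)"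
      by (intro set_integrable_ball_continuous continuous_on_abs_reflected_product assms(1,2))
    show "set_integrable lborel ?B (\<lambda>z. Bu * Bv)"
      by (intro set_integrable_ball_continuous continuous_on_const)
    show "\<bar>u (w + z) * v (w - z)\<bar> \<le> Bu * Bv" for z
      unfolding abs_mult by (intro mult_mono bu bv) (use bu[of 0] in auto)
  qed
  also have "\<dots> = measure lborel ?B * (Bu * Bv)"
    using emeasure_bounded_finite[of ?B] by (simp add: set_integral_const)
  finally show ?thesis
    using content_ball_pos[OF \<open>R > 0\<close>, where 'a='a]
    by (simp add: ball_avg_def divide_le_eq mult.commute)
qed

lemma bdd_above_ball_avg:
  fixes u v :: "'a::euclidean_space \<Rightarrow> real"
  assumes "continuous_on UNIV u" "continuous_on UNIV v" "\<And>x. \<bar>u x\<bar> \<le> Bu" "\<And>x. \<bar>v x\<bar> \<le> Bv"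
  shows "bdd_above (ball_avg u v w ` {0<..})"
  using ball_avg_le_bound[OF assms] by (intro bdd_aboveI2[where M="Bu * Bv"]) auto

lemma ball_avg_le_bmax:
  fixes u v :: "'a::euclidean_space \<Rightarrow> real"
  assumes "continuous_on UNIV u" "continuous_on UNIV v" "\<And>x. \<bar>u x\<bar> \<le> Bu" "\<And>x. \<bar>v x\<bar> \<le> Bv"
    and "R > 0"
  shows "ball_avg u v w R \<le> bmax u v w"
  unfolding bmax_eq_SUP_ball_avg
  using assms(5) by (intro cSUP_upper bdd_above_ball_avg[OF assms(1-4)]) simp

lemma nn_integral_ball_eq_ball_avg:
  fixes u v :: "'a::euclidean_space \<Rightarrow> real"
  assumes "continuous_on UNIV u" "continuous_on UNIV v"
  shows "(\<integral>\<^sup>+z\<in>ball 0 R. ennreal (\<bar>u (w + z) * v (w - z)\<bar> / measure lborel (ball (0::'a) R)) \<partial>lborel)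
       = ennreal (ball_avg u v w R)"
  unfolding ball_avg_def set_integral_divide_zero[symmetric]
  by (intro set_nn_integral_eq_set_integral set_integrable_divide set_integrable_ball_continuous
      continuous_on_abs_reflected_product assms) auto

lemma ennreal_abs_ball_avg_diff_le:
  fixes u v :: "'a::euclidean_space \<Rightarrow> real"
  assumes "continuous_on UNIV u" "continuous_on UNIV v" and "c \<ge> 0"
  shows "ennreal (\<bar>ball_avg u v x R - ball_avg u v y R\<bar> / c)
    \<le> (\<integral>\<^sup>+z\<in>ball 0 R. ennreal (\<bar>\<bar>u (y + z) * v (y - z)\<bar> - \<bar>u (x + z) * v (x - z)\<bar>\<bar>
          / (c * measure lborel (ball (0::'a) R))) \<partial>lborel)"
proof -
  define \<phi> where "\<phi> w z = \<bar>u (w + z) * v (w - z)\<bar> / (c * measure lborel (ball (0::'a) R))" for w z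
  have \<phi>_int: "set_integrable lborel (ball 0 R) (\<phi> w)" for w
    unfolding \<phi>_def
    by (intro set_integrable_divide set_integrable_ball_continuous continuous_on_abs_reflected_product assms)
  have \<phi>_integral: "(\<integral>z\<in>ball 0 R. \<phi> w z \<partial>lborel) = ball_avg u v w R / c" for w
    by (simp add: \<phi>_def ball_avg_def mult.commute)
  have \<phi>_diff: "\<bar>\<phi> y z - \<phi> x z\<bar> = \<bar>\<bar>u (y + z) * v (y - z)\<bar> - \<bar>u (x + z) * v (x - z)\<bar>\<bar>
      / (c * measure lborel (ball (0::'a) R))" for z
    using \<open>c \<ge> 0\<close> by (simp add: \<phi>_def abs_divide abs_mult flip: diff_divide_distrib)
  have "ennreal (\<bar>ball_avg u v x R - ball_avg u v y R\<bar> / c)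
      = ennreal \<bar>(\<integral>z\<in>ball 0 R. \<phi> y z \<partial>lborel) - (\<integral>z\<in>ball 0 R. \<phi> x z \<partial>lborel)\<bar>"
    using \<open>c \<ge> 0\<close> by (simp add: \<phi>_integral abs_minus_commute abs_divide flip: diff_divide_distrib)
  also have "\<dots> \<le> (\<integral>\<^sup>+z\<in>ball 0 R. ennreal \<bar>\<phi> y z - \<phi> x z\<bar> \<partial>lborel)"
    by (rule ennreal_abs_set_integral_diff_le[OF \<phi>_int \<phi>_int])
  also have "(\<integral>\<^sup>+z\<in>ball 0 R. ennreal \<bar>\<phi> y z - \<phi> x z\<bar> \<partial>lborel)
      = (\<integral>\<^sup>+z\<in>ball 0 R. ennreal (\<bar>\<bar>u (y + z) * v (y - z)\<bar> - \<bar>u (x + z) * v (x - z)\<bar>\<bar>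
          / (c * measure lborel (ball (0::'a) R))) \<partial>lborel)"
    by (simp only: \<phi>_diff)
  finally show ?thesis .
qed

text \<open>Bounds the gradient in w of f(w + z) g(w - z), by the product rule.\<close>

definition product_rule_bound :: "('a::euclidean_space \<Rightarrow> real) \<Rightarrow> ('a \<Rightarrow> real) \<Rightarrow> 'a \<Rightarrow> 'a \<Rightarrow> real" where
  "product_rule_bound f g w z = grad_norm f (w + z) * g (w - z) + f (w + z) * grad_norm g (w - z)"

lemma product_rule_bound_nonneg:
  assumes "smooth f" "smooth g" "\<And>x. f x \<ge> 0" "\<And>x. g x \<ge> 0"
  shows "product_rule_bound f g w z \<ge> 0"
  unfolding product_rule_bound_def
  by (intro add_nonneg_nonneg mult_nonneg_nonneg grad_norm_nonneg assms)

lemma continuous_on_product_rule_bound_segment: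
  assumes "smooth f" "smooth g"
  shows "continuous_on UNIV (\<lambda>p. product_rule_bound f g (x + fst p *\<^sub>R (y - x)) (snd p))"
  unfolding product_rule_bound_def
  by (intro continuous_intros
      continuous_on_compose2[OF smooth_continuous[OF assms(1)]]
      continuous_on_compose2[OF smooth_continuous[OF assms(2)]]
      continuous_on_compose2[OF continuous_on_grad_norm[OF assms(1)]]
      continuous_on_compose2[OF continuous_on_grad_norm[OF assms(2)]]) auto

lemma continuous_on_product_rule_bound_line:
  assumes "smooth f" "smooth g"
  shows "continuous_on UNIV (\<lambda>t. product_rule_bound f g (x + t *\<^sub>R (y - x)) z)"
  using continuous_on_compose2[OF continuous_on_product_rule_bound_segment[OF assms]
      continuous_on_Pair[OF continuous_on_id continuous_on_const]]
  by simp

lemma abs_product_increment_le: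
  fixes f g :: "'a::euclidean_space \<Rightarrow> real"
  assumes sf: "smooth f" and sg: "smooth g" and f0: "\<And>x. f x \<ge> 0" and g0: "\<And>x. g x \<ge> 0"
  shows "\<bar>f (y + z) * g (y - z) - f (x + z) * g (x - z)\<bar>
    \<le> dist x y * integral {0..1} (\<lambda>t. product_rule_bound f g (x + t *\<^sub>R (y - x)) z)"
proof -
  define v where "v = y - x"
  define a b where "a = x + z" and "b = x - z"
  define P where "P t = product_rule_bound f g (x + t *\<^sub>R v) z" for t
  define Df Dg where "Df t = frechet_derivative f (at (a + t *\<^sub>R v)) v"
    and "Dg t = frechet_derivative g (at (b + t *\<^sub>R v)) v" for t
  define D where "D t = Df t * g (b + t *\<^sub>R v) + Dg t * f (a + t *\<^sub>R v)" for t
  define \<phi> where "\<phi> t = f (a + t *\<^sub>R v) * g (b + t *\<^sub>R v)" for t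
  have "(\<phi> has_real_derivative D t) (at t)" for t
    unfolding \<phi>_def D_def Df_def Dg_def
    by (rule DERIV_mult[OF has_real_derivative_along_line[OF sf] has_real_derivative_along_line[OF sg]])
  then have "(D has_integral \<phi> 1 - \<phi> 0) {0..1}"
    by (intro fundamental_theorem_of_calculus)
       (auto simp: has_real_derivative_iff_has_vector_derivative[symmetric] intro: DERIV_subset)
  then have D_int: "D integrable_on {0..1}" and D_eq: "integral {0..1} D = \<phi> 1 - \<phi> 0"
    by (auto simp: integral_unique has_integral_integrable)
  have "(\<lambda>t. dist x y * P t) integrable_on {0..1}"
    using continuous_on_product_rule_bound_line[OF sf sg, of x y z]
    unfolding P_def v_def
    by (intro integrable_continuous_real continuous_intros) (auto intro: continuous_on_subset)
  moreover have "norm (D t) \<le> dist x y * P t" for t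
  proof -
    have "\<bar>D t\<bar> \<le> \<bar>Df t\<bar> * g (b + t *\<^sub>R v) + \<bar>Dg t\<bar> * f (a + t *\<^sub>R v)"
      unfolding D_def using f0 g0 by (metis abs_mult abs_of_nonneg abs_triangle_ineq)
    also have "\<dots> \<le> grad_norm f (a + t *\<^sub>R v) * norm v * g (b + t *\<^sub>R v)
                   + grad_norm g (b + t *\<^sub>R v) * norm v * f (a + t *\<^sub>R v)"
      unfolding Df_def Dg_def
      by (intro add_mono mult_right_mono abs_directional_derivative_le_grad_norm sf sg f0 g0)
    also have "\<dots> = dist x y * P t"
      by (simp add: P_def product_rule_bound_def a_def b_def v_def dist_norm norm_minus_commute
          algebra_simps)
    finally show ?thesis by simp
  qed
  ultimately have "norm (\<phi> 1 - \<phi> 0) \<le> integral {0..1} (\<lambda>t. dist x y * P t)"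
    unfolding D_eq[symmetric] by (rule integral_norm_bound_integral[OF D_int])
  moreover have "\<phi> 1 = f (y + z) * g (y - z)" "\<phi> 0 = f (x + z) * g (x - z)"
    by (simp_all add: \<phi>_def a_def b_def v_def algebra_simps)
  ultimately show ?thesis
    by (simp add: P_def v_def)
qed

lemma ennreal_abs_product_increment_le:
  fixes f g :: "'a::euclidean_space \<Rightarrow> real"
  assumes sf: "smooth f" and sg: "smooth g" and f0: "\<And>x. f x \<ge> 0" and g0: "\<And>x. g x \<ge> 0"
    and c: "c \<ge> 0"
  shows "ennreal (\<bar>f (y + z) * g (y - z) - f (x + z) * g (x - z)\<bar> / (dist x y * c))
    \<le> (\<integral>\<^sup>+t\<in>{0..1}. ennreal (product_rule_bound f g (x + t *\<^sub>R (y - x)) z / c) \<partial>lborel)"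
proof -
  define P where "P t = product_rule_bound f g (x + t *\<^sub>R (y - x)) z" for t
  have P0: "P t \<ge> 0" for t
    unfolding P_def using product_rule_bound_nonneg[OF sf sg f0 g0] .
  then have P0': "P t / c \<ge> 0" for t
    using c by simp
  have P_int: "P integrable_on {0..1}"
    using continuous_on_product_rule_bound_line[OF sf sg, of x y z] unfolding P_def
    by (intro integrable_continuous_real) (auto intro: continuous_on_subset)
  then have "(\<lambda>t. P t / c) integrable_on {0..1}"
    by (rule integrable_on_divide)
  from nn_integral_has_integral_lebesgue[OF P0' integrable_integral[OF this]]
  have "(\<integral>\<^sup>+t\<in>{0..1}. ennreal (P t / c) \<partial>lborel) = ennreal (integral {0..1} P / c)"
    by (simp add: nn_integral_set_ennreal mult.commute)
  moreover have "\<bar>f (y + z) * g (y - z) - f (x + z) * g (x - z)\<bar> / (dist x y * c) \<le> integral {0..1} P / c"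
  proof (cases "dist x y = 0")
    case True \<comment> \<open>the left side is 0 by the convention r / 0 = 0\<close>
    then show ?thesis
      using integral_nonneg[OF P_int P0] c by simp
  next
    case False
    then have "\<bar>f (y + z) * g (y - z) - f (x + z) * g (x - z)\<bar> / dist x y \<le> integral {0..1} P"
      using abs_product_increment_le[OF sf sg f0 g0, of y z x]
      by (simp add: P_def[abs_def] pos_divide_le_eq mult.commute)
    then show ?thesis
      using c by (simp add: divide_right_mono flip: divide_divide_eq_left)
  qed
  ultimately show ?thesis
    unfolding P_def by (simp add: ennreal_leI)
qed

lemma nn_integral_product_rule_bound_le:
  fixes f g :: "'a::euclidean_space \<Rightarrow> real"
  assumes sf: "smooth f" and sg: "smooth g" and "compact_support f" "compact_support g"
    and f0: "\<And>x. f x \<ge> 0" and g0: "\<And>x. g x \<ge> 0" and R: "R > 0"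
  shows "(\<integral>\<^sup>+z\<in>ball 0 R. ennreal (product_rule_bound f g w z / measure lborel (ball (0::'a) R)) \<partial>lborel)
    \<le> ennreal (bmax (grad_norm f) g w + bmax f (grad_norm g) w)"
proof -
  let ?B = "ball (0::'a) R"
  let ?m = "measure lborel ?B"
  define F G where "F z = \<bar>grad_norm f (w + z) * g (w - z)\<bar> / ?m"
    and "G z = \<bar>f (w + z) * grad_norm g (w - z)\<bar> / ?m" for z
  have cf: "continuous_on UNIV f" and cg: "continuous_on UNIV g"
    and cdf: "continuous_on UNIV (grad_norm f)" and cdg: "continuous_on UNIV (grad_norm g)"
    using sf sg by (simp_all add: smooth_continuous continuous_on_grad_norm)
  obtain Bf Bg Bdf Bdg where "\<And>x. \<bar>f x\<bar> \<le> Bf" "\<And>x. \<bar>g x\<bar> \<le> Bg"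
    "\<And>x. \<bar>grad_norm f x\<bar> \<le> Bdf" "\<And>x. \<bar>grad_norm g x\<bar> \<le> Bdg"
    using assms bounded_smooth_compact_support bounded_grad_norm_compact_support by metis
  note bounds = this
  have [measurable]: "(\<lambda>z. \<bar>grad_norm f (w + z) * g (w - z)\<bar>) \<in> borel_measurable borel"
    "(\<lambda>z. \<bar>f (w + z) * grad_norm g (w - z)\<bar>) \<in> borel_measurable borel"
    by (intro borel_measurable_continuous_onI continuous_on_abs_reflected_product cf cg cdf cdg)+
  then have [measurable]: "F \<in> borel_measurable lborel" "G \<in> borel_measurable lborel"
    unfolding F_def G_def by measurable
  have [measurable]: "?B \<in> sets borel" by simp
  have "ennreal (product_rule_bound f g w z / ?m) = ennreal (F z) + ennreal (G z)" for z
    using f0 g0 grad_norm_nonneg[OF sf] grad_norm_nonneg[OF sg]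
    by (simp add: product_rule_bound_def F_def G_def add_divide_distrib)
  then have "(\<integral>\<^sup>+z\<in>?B. ennreal (product_rule_bound f g w z / ?m) \<partial>lborel)
      = (\<integral>\<^sup>+z. ennreal (F z) * indicator ?B z + ennreal (G z) * indicator ?B z \<partial>lborel)"
    by (simp add: distrib_right)
  also have "\<dots> = (\<integral>\<^sup>+z\<in>?B. ennreal (F z) \<partial>lborel) + (\<integral>\<^sup>+z\<in>?B. ennreal (G z) \<partial>lborel)"
    by (rule nn_integral_add; measurable)
  also have "\<dots> = ennreal (ball_avg (grad_norm f) g w R) + ennreal (ball_avg f (grad_norm g) w R)"
    unfolding F_def G_def by (simp add: nn_integral_ball_eq_ball_avg cf cg cdf cdg)
  also have "\<dots> = ennreal (ball_avg (grad_norm f) g w R + ball_avg f (grad_norm g) w R)"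
    by (simp add: ball_avg_nonneg)
  also have "\<dots> \<le> ennreal (bmax (grad_norm f) g w + bmax f (grad_norm g) w)"
    by (intro ennreal_leI add_mono ball_avg_le_bmax[OF _ _ bounds(3) bounds(2) R]
        ball_avg_le_bmax[OF _ _ bounds(1) bounds(4) R] cf cg cdf cdg)
  finally show ?thesis .
qed

lemma ball_avg_diff_le_segment_integral:
  fixes f g :: "'a::euclidean_space \<Rightarrow> real"
  assumes sf: "smooth f" and sg: "smooth g" and "compact_support f" "compact_support g"
    and f0: "\<And>x. f x \<ge> 0" and g0: "\<And>x. g x \<ge> 0" and R: "R > 0"
  shows "ennreal \<bar>ball_avg f g x R - ball_avg f g y R\<bar>
    \<le> segment_integral (\<lambda>w. bmax f (grad_norm g) w + bmax (grad_norm f) g w) x y"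
proof -
  define B where "B = ball (0::'a) R"
  define m where "m = measure lborel B"
  define d where "d = dist x y"
  define h where "h w = bmax f (grad_norm g) w + bmax (grad_norm f) g w" for w
  \<comment> \<open>The constants d and m stay inside the integrands: the bound h is not known to be
    measurable along the segment, so they could not be pulled out of its integral.\<close>
  define P where "P t z = ennreal (product_rule_bound f g (x + t *\<^sub>R (y - x)) z / m)" for t z
  have m0: "m > 0"
    unfolding m_def B_def using R by (rule content_ball_pos)
  have "ennreal (\<bar>ball_avg f g x R - ball_avg f g y R\<bar> / d)
      \<le> (\<integral>\<^sup>+z\<in>B. ennreal (\<bar>\<bar>f (y + z) * g (y - z)\<bar> - \<bar>f (x + z) * g (x - z)\<bar>\<bar> / (d * m)) \<partial>lborel)"
    unfolding B_def m_def d_def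
    by (intro ennreal_abs_ball_avg_diff_le smooth_continuous sf sg) simp
  also have "\<dots> \<le> (\<integral>\<^sup>+z\<in>B. (\<integral>\<^sup>+t\<in>{0..1}. P t z \<partial>lborel) \<partial>lborel)"
  proof (intro nn_integral_mono mult_right_mono)
    fix z
    have "ennreal (\<bar>\<bar>f (y + z) * g (y - z)\<bar> - \<bar>f (x + z) * g (x - z)\<bar>\<bar> / (d * m))
        \<le> ennreal (\<bar>f (y + z) * g (y - z) - f (x + z) * g (x - z)\<bar> / (dist x y * m))"
      unfolding d_def using m0 by (intro ennreal_leI divide_right_mono abs_triangle_ineq3) simp
    also have "ennreal (\<bar>f (y + z) * g (y - z) - f (x + z) * g (x - z)\<bar> / (dist x y * m))
        \<le> (\<integral>\<^sup>+t\<in>{0..1}. P t z \<partial>lborel)"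
      unfolding P_def using m0 by (intro ennreal_abs_product_increment_le sf sg f0 g0) simp
    finally show "ennreal (\<bar>\<bar>f (y + z) * g (y - z)\<bar> - \<bar>f (x + z) * g (x - z)\<bar>\<bar> / (d * m))
        \<le> (\<integral>\<^sup>+t\<in>{0..1}. P t z \<partial>lborel)" .
  qed simp
  also have "\<dots> = (\<integral>\<^sup>+t\<in>{0..1}. (\<integral>\<^sup>+z\<in>B. P t z \<partial>lborel) \<partial>lborel)"
  proof (rule lborel_set_nn_integral_swap)
    have [measurable]: "(\<lambda>p. product_rule_bound f g (x + fst p *\<^sub>R (y - x)) (snd p)) \<in> borel_measurable borel"
      by (rule borel_measurable_continuous_onI[OF continuous_on_product_rule_bound_segment[OF sf sg]])
    show "case_prod P \<in> borel_measurable borel"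
      unfolding P_def case_prod_beta' by measurable
  qed (simp_all add: B_def)
  also have "\<dots> \<le> (\<integral>\<^sup>+t\<in>{0..1}. ennreal (h (x + t *\<^sub>R (y - x))) \<partial>lborel)"
    using nn_integral_product_rule_bound_le[OF assms]
    by (intro nn_integral_mono mult_right_mono) (simp_all add: P_def B_def m_def h_def add.commute)
  finally have "ennreal d * ennreal (\<bar>ball_avg f g x R - ball_avg f g y R\<bar> / d) \<le> segment_integral h x y"
    unfolding segment_integral_def d_def by (rule mult_left_mono) simp
  then show ?thesis
    unfolding h_def[abs_def] d_def
    by (cases "x = y") (simp_all flip: ennreal_mult)
qed

theorem mainTheorem2:
  fixes f g :: "'a::euclidean_space \<Rightarrow> real"
  assumes "smooth f" "smooth g" "compact_support f" "compact_support g"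
    and "\<And>x. f x \<ge> 0" "\<And>x. g x \<ge> 0"
  shows "ennreal \<bar>bmax f g x - bmax f g y\<bar> \<le>
         segment_integral (\<lambda>z. bmax f (grad_norm g) z + bmax (grad_norm f) g z) x y"
proof (cases "segment_integral (\<lambda>z. bmax f (grad_norm g) z + bmax (grad_norm f) g z) x y")
  case (real r)
  have cf: "continuous_on UNIV f" and cg: "continuous_on UNIV g"
    using assms(1,2) by (simp_all add: smooth_continuous)
  obtain Bf Bg where Bf: "\<And>x. \<bar>f x\<bar> \<le> Bf" and Bg: "\<And>x. \<bar>g x\<bar> \<le> Bg"
    using assms bounded_smooth_compact_support by metis
  have "\<bar>bmax f g x - bmax f g y\<bar> \<le> r"
    unfolding bmax_eq_SUP_ball_avg
  proof (rule abs_SUP_diff_le)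
    fix R :: real
    assume "R \<in> {0<..}"
    then show "\<bar>ball_avg f g x R - ball_avg f g y R\<bar> \<le> r"
      using ball_avg_diff_le_segment_integral[OF assms, of R x y] real by simp
  qed (auto intro: bdd_above_ball_avg[OF cf cg Bf Bg])
  then show ?thesis
    using real by (simp add: ennreal_leI)
qed simp

end
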